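(* Fix integers $T\ge 2$ and $1\le T_n\le T$, a number $\bar\epsilon_n>0$, and rates $0<q_n\le q$. Define $\epsilon_n^1,\dots,\epsilon_n^T$ recursively by $$\epsilon_n^t=\begin{cases}\dfrac{\bar\epsilon_n-\sum_{\tau=1}^{t-1}\epsilon_n^\tau}{T-t+1}\left(\dfrac{q_n}{q}\right)^2, & t<T_n,\\[2ex] \dfrac{\bar\epsilon_n-\sum_{\tau=1}^{t-1}\epsilon_n^\tau}{T-t+1}, & t\ge T_n.\end{cases}$$ Then $\epsilon_n^t\ge \epsilon_n^{t-1}$ for all $2\le t\le T_n$, and $\epsilon_n^t=\epsilon_n^{t-1}$ for all $T_n<t\le T$. In particular, the per-round privacy spent $\epsilon_n^t$ is non-decreasing in $t$ and constant from round $T_n$ on.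
   Context: In the paper's time-adaptive differentially private federated learning scheme, $\bar\epsilon_n$ is the total Rényi-DP privacy budget of client $n$, $T$ the number of rounds, $T_n$ the round at which client $n$ switches from a saving mode (sampling rate $q_n$) to a spending mode (sampling rate $q$), and $\epsilon_n^t$ the Rényi-DP privacy spent by client $n$ in round $t$. *)

theory Defs
  imports Complex_Main
begin

definition dp_factor :: "nat \<Rightarrow> real \<Rightarrow> real \<Rightarrow> nat \<Rightarrow> real" where
  "dp_factor Tn qn q t = (if t < Tn then (qn / q)^2 else 1)"

fun dp_spent :: "nat \<Rightarrow> nat \<Rightarrow> real \<Rightarrow> real \<Rightarrow> real \<Rightarrow> nat \<Rightarrow> real" where
  "dp_spent T Tn ebar qn q 0 = 0"
| "dp_spent T Tn ebar qn q (Suc k) =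
     dp_spent T Tn ebar qn q k
     + dp_factor Tn qn q (Suc k) * (ebar - dp_spent T Tn ebar qn q k) / (real T - real (Suc k) + 1)"

definition dp_eps :: "nat \<Rightarrow> nat \<Rightarrow> real \<Rightarrow> real \<Rightarrow> real \<Rightarrow> nat \<Rightarrow> real" where
  "dp_eps T Tn ebar qn q t =
     dp_factor Tn qn q t * (ebar - dp_spent T Tn ebar qn q (t - 1)) / (real T - real t + 1)"

lemma dp_spent_eq_sum:
  "dp_spent T Tn ebar qn q k = (\<Sum>\<tau>=1..k. dp_eps T Tn ebar qn q \<tau>)"
  by (induction k) (simp_all add: dp_eps_def)

end

theory Submission
  imports Defs
begin

text \<open>With R the budget left after round k and N = T - k the number of rounds still to come,
  round k+1 spends a R / N and leaves R (1 - a/N), of which round k+2 spends the share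
  b R (1 - a/N) / (N - 1), where a \<le> b are the factors of the two rounds. Since a \<le> 1,
  leaving R (1 - a/N) \<ge> R (N - 1)/N behind can only raise the per-round share, and a \<le> b
  raises it further; when a = b = 1 both rounds spend exactly R / N.\<close>

definition dp_remaining :: "nat \<Rightarrow> nat \<Rightarrow> real \<Rightarrow> real \<Rightarrow> real \<Rightarrow> nat \<Rightarrow> real" where
  "dp_remaining T Tn ebar qn q k = ebar - dp_spent T Tn ebar qn q k"

lemma dp_factor_nonneg: "0 \<le> dp_factor Tn qn q t"
  by (simp add: dp_factor_def)

lemma dp_factor_le_one:
  assumes "\<bar>qn\<bar> \<le> \<bar>q\<bar>"
  shows "dp_factor Tn qn q t \<le> 1"
proof -
  have "\<bar>qn / q\<bar> \<le> 1"
    using assms by (cases "q = 0") (simp_all add: abs_divide divide_le_eq_1)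
  then have "\<bar>qn / q\<bar>^2 \<le> 1"
    by (simp add: power_le_one)
  then show ?thesis
    by (simp add: dp_factor_def power_divide)
qed

lemma dp_factor_mono:
  assumes "\<bar>qn\<bar> \<le> \<bar>q\<bar>" and "s \<le> t"
  shows "dp_factor Tn qn q s \<le> dp_factor Tn qn q t"
  using dp_factor_le_one[OF assms(1), of Tn s] assms(2) by (simp add: dp_factor_def)

lemma dp_eps_Suc:
  "dp_eps T Tn ebar qn q (Suc k)
     = dp_factor Tn qn q (Suc k) * dp_remaining T Tn ebar qn q k / (real T - real k)"
  by (simp add: dp_eps_def dp_remaining_def)

lemma dp_remaining_Suc:
  "dp_remaining T Tn ebar qn q (Suc k)
     = dp_remaining T Tn ebar qn q k * (1 - dp_factor Tn qn q (Suc k) / (real T - real k))"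
  by (simp add: dp_remaining_def algebra_simps)

lemma dp_remaining_nonneg:
  assumes "0 \<le> ebar" and "\<bar>qn\<bar> \<le> \<bar>q\<bar>" and "k \<le> T"
  shows "0 \<le> dp_remaining T Tn ebar qn q k"
  using assms(3)
proof (induction k)
  case 0
  then show ?case
    using assms(1) by (simp add: dp_remaining_def)
next
  case (Suc k)
  have "dp_factor Tn qn q (Suc k) \<le> 1" and "1 \<le> real T - real k"
    using Suc.prems dp_factor_le_one[OF assms(2)] by auto
  then have "dp_factor Tn qn q (Suc k) / (real T - real k) \<le> 1"
    by (simp add: divide_le_eq)
  then show ?case
    using Suc by (simp add: dp_remaining_Suc)
qed

lemma share_le_next_share:
  fixes R N a b :: real
  assumes "0 \<le> R" and "1 < N" and "0 \<le> a" and "a \<le> b" and "b \<le> 1"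
  shows "a * R / N \<le> b * (R * (1 - a / N)) / (N - 1)"
proof -
  have "a * R / N = a * R * (N - 1) / (N * (N - 1))"
    using assms(2) by (simp add: field_simps)
  also have "\<dots> \<le> b * R * (N - a) / (N * (N - 1))"
  proof (rule divide_right_mono)
    have "a * (N - 1) \<le> b * (N - a)"
      using assms by (intro mult_mono) auto
    from mult_right_mono[OF this assms(1)]
    show "a * R * (N - 1) \<le> b * R * (N - a)"
      by (simp add: ac_simps)
  qed (use assms(2) in simp)
  also have "\<dots> = b * (R * (1 - a / N)) / (N - 1)"
    using assms(2) by (simp add: field_simps)
  finally show ?thesis .
qed

lemma dp_eps_le_Suc:
  assumes "0 \<le> ebar" and "\<bar>qn\<bar> \<le> \<bar>q\<bar>" and "Suc (Suc k) \<le> T"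
  shows "dp_eps T Tn ebar qn q (Suc k) \<le> dp_eps T Tn ebar qn q (Suc (Suc k))"
proof -
  define N where "N = real T - real k"
  have "1 < N" and N_Suc: "real T - real (Suc k) = N - 1"
    using assms(3) by (simp_all add: N_def)
  have "0 \<le> dp_remaining T Tn ebar qn q k"
    using assms by (intro dp_remaining_nonneg) auto
  from share_le_next_share[OF this \<open>1 < N\<close> dp_factor_nonneg
      dp_factor_mono[OF assms(2) le_SucI[OF order_refl]] dp_factor_le_one[OF assms(2)]]
  show ?thesis
    unfolding dp_eps_Suc dp_remaining_Suc N_def[symmetric] N_Suc .
qed

lemma dp_eps_Suc_eq:
  assumes "Tn \<le> Suc k" and "Suc (Suc k) \<le> T"
  shows "dp_eps T Tn ebar qn q (Suc (Suc k)) = dp_eps T Tn ebar qn q (Suc k)"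
proof -
  have spending: "dp_factor Tn qn q (Suc k) = 1" "dp_factor Tn qn q (Suc (Suc k)) = 1"
    using assms(1) by (simp_all add: dp_factor_def)
  define N where "N = real T - real k"
  have "N > 1" and N_Suc: "real T - real (Suc k) = N - 1"
    using assms(2) by (simp_all add: N_def)
  then have "R * (1 - 1 / N) / (N - 1) = R / N" for R
    by (simp add: field_simps)
  then show ?thesis
    unfolding dp_eps_Suc dp_remaining_Suc spending N_def[symmetric] N_Suc by simp
qed

theorem mainTheorem2:
  fixes T Tn :: nat and ebar qn q :: real
  assumes "T \<ge> 2" and "1 \<le> Tn" and "Tn \<le> T"
    and "ebar > 0" and "0 < qn" and "qn \<le> q"
  shows "(\<forall>t. 2 \<le> t \<and> t \<le> Tn \<longrightarrow> dp_eps T Tn ebar qn q t \<ge> dp_eps T Tn ebar qn q (t - 1))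
       \<and> (\<forall>t. Tn < t \<and> t \<le> T \<longrightarrow> dp_eps T Tn ebar qn q t = dp_eps T Tn ebar qn q (t - 1))"
proof (intro conjI allI impI)
  fix t
  assume t: "2 \<le> t \<and> t \<le> Tn"
  have "0 \<le> ebar" and rates: "\<bar>qn\<bar> \<le> \<bar>q\<bar>"
    using assms(4-6) by auto
  from t have "t = Suc (Suc (t - 2))"
    by auto
  then obtain k where "t = Suc (Suc k)"
    by blast
  then show "dp_eps T Tn ebar qn q t \<ge> dp_eps T Tn ebar qn q (t - 1)"
    using dp_eps_le_Suc[OF \<open>0 \<le> ebar\<close> rates, of k T Tn] t assms(3) by simp
next
  fix t
  assume t: "Tn < t \<and> t \<le> T"
  then have "t = Suc (Suc (t - 2))"
    using assms(2) by auto
  then obtain k where "t = Suc (Suc k)"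
    by blast
  then show "dp_eps T Tn ebar qn q t = dp_eps T Tn ebar qn q (t - 1)"
    using dp_eps_Suc_eq[of Tn k T] t by simp
qed

end
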